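(* Let $\|\cdot\|$ be a strictly convex norm on $\mathbb{R}^n$ that is continuously differentiable on $\mathbb{R}^n\setminus\{0\}$. If $\|\cdot\|$ is doubling in the tangent plane, then $\|\cdot\|$ is doubling. Moreover, if $\|\cdot\|$ is doubling in the tangent plane and also geometrically convex in the tangent plane, then $\|\cdot\|$ is geometrically convex. Further, if $\|\cdot\|$ is doubling in the tangent plane and also balanced in the tangent plane, then it is balanced.
   Context: $N(x)$ denotes the gradient of $\|\cdot\|$ at $x\neq0$, $\langle\cdot,\cdot\rangle$ the Euclidean inner product, and $h(x,y)=\|y\|-\langle y,N(x)\rangle$ for $x\ne0$. Strict convexity: if $x,y\ne0$ and $\|x+y\|=\|x\|+\|y\|$ then $y=\alpha x$ for some $\alpha>0$. Definitions (each "is P" means "is P with some constants"): - doubling (constants $T,r>0$): $h(x,x+2y)\le Th(x,x+y)$ for all $x\ne0$, $\|y\|\le r\|x\|$; - doubling in the tangent plane (constants $T,r>0$): the same inequality for all $x\neq0$, $\|y\|\le r\|x\|$ with $\langle y,N(x)\rangle=0$; - geometrically convex (constants $r>0$, $\Lambda>2$): $\Lambda h(x,x+y)\le h(x,x+2y)$ for all $x\ne0$, $\|y\|\le r\|x\|$; - geometrically convex in the tangent plane (constants $\Lambda>2$, $r>0$): $h(x,x+2y)\ge\Lambda h(x,x+y)$ for all $x\ne0$, $\|y\|\le r\|x\|$ with $\langle y,N(x)\rangle=0$; - balanced (constants $R>0$, $K\ge1$): $h(x,x+y)\le Kh(x,x-y)$ for all $x\neq0$, $\|y\|\le R\|x\|$;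 - balanced in the tangent plane (constants $r,K>0$): $h(x,x+y)\le Kh(x,x-y)$ for all $x\ne0$, $\|y\|\le r\|x\|$ with $\langle y,N(x)\rangle=0$. *)

theory Defs
  imports "HOL-Analysis.Analysis"
begin

definition is_norm :: "(real^'n \<Rightarrow> real) \<Rightarrow> bool" where
  "is_norm nrm \<longleftrightarrow>
     (\<forall>x. 0 \<le> nrm x) \<and> (\<forall>x. nrm x = 0 \<longleftrightarrow> x = 0) \<and>
     (\<forall>c x. nrm (c *\<^sub>R x) = \<bar>c\<bar> * nrm x) \<and>
     (\<forall>x y. nrm (x + y) \<le> nrm x + nrm y)"

definition strictly_convex_norm :: "(real^'n \<Rightarrow> real) \<Rightarrow> bool" where
  "strictly_convex_norm nrm \<longleftrightarrow>
     (\<forall>x y. x \<noteq> 0 \<and> y \<noteq> 0 \<and> nrm (x + y) = nrm x + nrm y \<longrightarrow>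
            (\<exists>\<alpha>>0. y = \<alpha> *\<^sub>R x))"

definition grad :: "(real^'n \<Rightarrow> real) \<Rightarrow> real^'n \<Rightarrow> real^'n" where
  "grad nrm x = (SOME g. (nrm has_derivative (\<lambda>v. g \<bullet> v)) (at x))"

definition C1_off_origin :: "(real^'n \<Rightarrow> real) \<Rightarrow> bool" where
  "C1_off_origin nrm \<longleftrightarrow>
     (\<forall>x. x \<noteq> 0 \<longrightarrow> nrm differentiable (at x)) \<and>
     continuous_on (- {0}) (grad nrm)"

definition hfun :: "(real^'n \<Rightarrow> real) \<Rightarrow> real^'n \<Rightarrow> real^'n \<Rightarrow> real" where
  "hfun nrm x y = nrm y - y \<bullet> grad nrm x"

definition doubling :: "(real^'n \<Rightarrow> real) \<Rightarrow> bool" where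
  "doubling nrm \<longleftrightarrow> (\<exists>T r. T > 0 \<and> r > 0 \<and>
     (\<forall>x y. x \<noteq> 0 \<and> nrm y \<le> r * nrm x \<longrightarrow>
        hfun nrm x (x + 2 *\<^sub>R y) \<le> T * hfun nrm x (x + y)))"

definition doubling_tangent :: "(real^'n \<Rightarrow> real) \<Rightarrow> bool" where
  "doubling_tangent nrm \<longleftrightarrow> (\<exists>T r. T > 0 \<and> r > 0 \<and>
     (\<forall>x y. x \<noteq> 0 \<and> nrm y \<le> r * nrm x \<and> y \<bullet> grad nrm x = 0 \<longrightarrow>
        hfun nrm x (x + 2 *\<^sub>R y) \<le> T * hfun nrm x (x + y)))"

definition geom_convex :: "(real^'n \<Rightarrow> real) \<Rightarrow> bool" where
  "geom_convex nrm \<longleftrightarrow> (\<exists>r \<Lambda>. r > 0 \<and> \<Lambda> > 2 \<and>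
     (\<forall>x y. x \<noteq> 0 \<and> nrm y \<le> r * nrm x \<longrightarrow>
        \<Lambda> * hfun nrm x (x + y) \<le> hfun nrm x (x + 2 *\<^sub>R y)))"

definition geom_convex_tangent :: "(real^'n \<Rightarrow> real) \<Rightarrow> bool" where
  "geom_convex_tangent nrm \<longleftrightarrow> (\<exists>\<Lambda> r. \<Lambda> > 2 \<and> r > 0 \<and>
     (\<forall>x y. x \<noteq> 0 \<and> nrm y \<le> r * nrm x \<and> y \<bullet> grad nrm x = 0 \<longrightarrow>
        hfun nrm x (x + 2 *\<^sub>R y) \<ge> \<Lambda> * hfun nrm x (x + y)))"

definition balanced :: "(real^'n \<Rightarrow> real) \<Rightarrow> bool" where
  "balanced nrm \<longleftrightarrow> (\<exists>R K. R > 0 \<and> K \<ge> 1 \<and>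
     (\<forall>x y. x \<noteq> 0 \<and> nrm y \<le> R * nrm x \<longrightarrow>
        hfun nrm x (x + y) \<le> K * hfun nrm x (x - y)))"

definition balanced_tangent :: "(real^'n \<Rightarrow> real) \<Rightarrow> bool" where
  "balanced_tangent nrm \<longleftrightarrow> (\<exists>r K. r > 0 \<and> K > 0 \<and>
     (\<forall>x y. x \<noteq> 0 \<and> nrm y \<le> r * nrm x \<and> y \<bullet> grad nrm x = 0 \<longrightarrow>
        hfun nrm x (x + y) \<le> K * hfun nrm x (x - y)))"

end

theory Submission
  imports Defs
begin

text \<open>
  Write \<open>y = t x + z\<close> with \<open>z\<close> in the tangent plane at \<open>x\<close>; by Euler's identity
  \<open>\<langle>N(x), x\<rangle> = \<parallel>x\<parallel>\<close> this forces \<open>t = \<langle>N(x), y\<rangle> / \<parallel>x\<parallel>\<close>, so \<open>|t| \<le> \<parallel>y\<parallel> / \<parallel>x\<parallel>\<close>.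
  Since \<open>h(x, \<cdot>)\<close> is positively homogeneous,
  \<open>h(x, x + y) = (1 + t) f(1 / (1 + t))\<close> and \<open>h(x, x + 2y) = (1 + 2t) f(2 / (1 + 2t))\<close>
  with \<open>f(s) = h(x, x + s z)\<close>, and similarly for \<open>x - y\<close> along \<open>-z\<close>.
  Now \<open>f\<close> is convex, nonnegative (the subgradient inequality for the norm) and vanishes at \<open>0\<close>,
  so it is nondecreasing on \<open>[0, \<infinity>)\<close>; the tangent-plane hypotheses say how \<open>f\<close> scales, and
  for \<open>|t|\<close> small the two arguments \<open>1/(1+t)\<close>, \<open>2/(1+2t)\<close> are close enough to \<open>1\<close>, \<open>2\<close>
  for these one-dimensional estimates to transfer, with worse constants.
\<close>

lemma convex_on_mono_right_of_min:
  fixes f :: "real \<Rightarrow> real"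
  assumes "convex_on UNIV f" "\<And>s. f m \<le> f s" "m \<le> a" "a \<le> b"
  shows "f a \<le> f b"
proof (cases "a = b")
  case False
  define l where "l = (a - m) / (b - m)"
  have l: "0 \<le> l" "l \<le> 1"
    using assms(3,4) by (auto simp: l_def divide_simps)
  have "l * (b - m) = a - m"
    using assms(3,4) False by (simp add: l_def)
  then have "a = (1 - l) * m + l * b"
    by (simp add: algebra_simps)
  with l have "f a \<le> (1 - l) * f m + l * f b"
    using convex_onD[OF assms(1), of l m b] by simp
  also have "\<dots> \<le> (1 - l) * f b + l * f b"
    using assms(2) l by (simp add: mult_left_mono)
  finally show ?thesis by (simp add: algebra_simps)
qed simp

lemma convex_on_shrink_lower_bound:
  fixes f :: "real \<Rightarrow> real"
  assumes "convex_on UNIV f" "0 \<le> c" "c \<le> 1" "1 - c \<le> \<rho>" "0 \<le> T"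
    and "f (2 * s) \<le> T * f s" "0 \<le> f s"
  shows "(1 - \<rho> * T) * f s \<le> f (c * s)"
proof -
  define l where "l = 1 / (2 - c)"
  have l: "0 \<le> l" "l \<le> 1" "l * (2 - c) = 1"
    using assms(2,3) by (auto simp: l_def field_simps)
  have "(1 - l) * (2 * s) + l * (c * s) = 2 * s - (l * (2 - c)) * s"
    by (simp add: algebra_simps)
  then have "(1 - l) * (2 * s) + l * (c * s) = s"
    unfolding l(3) by simp
  then have "f s \<le> (1 - l) * f (2 * s) + l * f (c * s)"
    using convex_onD[OF assms(1) l(1,2), of "2 * s" "c * s"] by simp
  then have "(2 - c) * f s \<le> (2 - c) * ((1 - l) * f (2 * s) + l * f (c * s))"
    using assms(3) by (simp add: mult_left_mono)
  also have "\<dots> = (2 - c - l * (2 - c)) * f (2 * s) + (l * (2 - c)) * f (c * s)"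
    by (simp add: algebra_simps)
  also have "\<dots> = (1 - c) * f (2 * s) + f (c * s)"
    unfolding l(3) by simp
  also have "\<dots> \<le> (1 - c) * (T * f s) + f (c * s)"
    using assms(3,6) by (simp add: mult_left_mono)
  finally have "(2 - c) * f s \<le> (1 - c) * (T * f s) + f (c * s)" .
  moreover have "(1 - (1 - c) * T) * f s = (2 - c) * f s - (1 - c) * (T * f s) - (1 - c) * f s"
    by (simp add: algebra_simps)
  moreover have "0 \<le> (1 - c) * f s"
    using assms(3,7) by simp
  moreover have "(1 - \<rho> * T) * f s \<le> (1 - (1 - c) * T) * f s"
    using assms(4,5,7) by (intro mult_right_mono) (auto simp: mult_right_mono)
  ultimately show ?thesis by linarith
qed

lemma doubling_on_line:
  fixes f :: "real \<Rightarrow> real"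
  assumes f: "convex_on UNIV f" "\<And>s. 0 \<le> f s" "f 0 = 0"
    and doubling: "\<And>s. 0 \<le> s \<Longrightarrow> s \<le> 4 \<Longrightarrow> f (2 * s) \<le> T * f s"
    and "0 \<le> T" "\<bar>t\<bar> \<le> 1/4"
  shows "(1 + 2 * t) * f (2 / (1 + 2 * t)) \<le> 2 * T\<^sup>2 * ((1 + t) * f (1 / (1 + t)))"
proof -
  define a where "a = 1 / (1 + t)"
  have a: "0 < a" "a \<le> 4/3" "0 \<le> 2 / (1 + 2 * t)" "2 / (1 + 2 * t) \<le> 2 * (2 * a)"
    using assms(6) by (auto simp: a_def field_simps)
  have "f (2 / (1 + 2 * t)) \<le> f (2 * (2 * a))"
    using convex_on_mono_right_of_min[OF f(1), of 0] f(2,3) a(3,4) by simp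
  also have "\<dots> \<le> T * f (2 * a)"
    using doubling[of "2 * a"] a by simp
  also have "\<dots> \<le> T * (T * f a)"
    using doubling a assms(5) by (simp add: mult_left_mono)
  finally have "(1 + 2 * t) * f (2 / (1 + 2 * t)) \<le> (1 + 2 * t) * (T\<^sup>2 * f a)"
    using assms(6) by (simp add: mult_left_mono power2_eq_square)
  also have "\<dots> \<le> 2 * (1 + t) * (T\<^sup>2 * f a)"
    using assms(6) f(2)[of a] by (intro mult_right_mono) auto
  also have "\<dots> = 2 * T\<^sup>2 * ((1 + t) * f a)"
    by simp
  finally show ?thesis by (simp add: a_def)
qed

lemma geom_convex_on_line_nonneg:
  fixes f :: "real \<Rightarrow> real"
  assumes f: "convex_on UNIV f" "\<And>s. 0 \<le> f s"
    and doubling: "\<And>s. 0 \<le> s \<Longrightarrow> s \<le> 4 \<Longrightarrow> f (2 * s) \<le> T * f s"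
    and expanding: "\<And>s. 0 \<le> s \<Longrightarrow> s \<le> 4 \<Longrightarrow> \<Lambda> * f s \<le> f (2 * s)"
    and t: "0 \<le> t" "t \<le> \<rho>"
    and M: "0 \<le> M" "M \<le> (1 - \<rho> * T) * \<Lambda>" and "0 \<le> T" "0 < \<Lambda>"
  shows "M * ((1 + t) * f (1 / (1 + t))) \<le> (1 + 2 * t) * f (2 / (1 + 2 * t))"
proof -
  define a where "a = 1 / (1 + t)"
  define c where "c = (1 + t) / (1 + 2 * t)"
  have a: "0 < a" "a \<le> 1" and c: "0 \<le> c" "c \<le> 1" "c * (2 * a) = 2 / (1 + 2 * t)"
    using t(1) by (simp_all add: a_def c_def divide_simps)
  have "1 - c = t / (1 + 2 * t)"
    using t(1) by (simp add: c_def field_simps)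
  also have "\<dots> \<le> t / 1"
    using t(1) by (intro divide_left_mono) auto
  finally have "1 - c \<le> \<rho>"
    using t(2) by simp
  have "0 \<le> (1 - \<rho> * T) * \<Lambda>"
    using M by linarith
  then have "0 \<le> 1 - \<rho> * T"
    using \<open>0 < \<Lambda>\<close> by (simp add: zero_le_mult_iff)
  have "M * f a \<le> (1 - \<rho> * T) * (\<Lambda> * f a)"
    using mult_right_mono[OF M(2) f(2)[of a]] by (simp add: mult.assoc)
  also have "\<dots> \<le> (1 - \<rho> * T) * f (2 * a)"
    using expanding a \<open>0 \<le> 1 - \<rho> * T\<close> by (simp add: mult_left_mono)
  also have "\<dots> \<le> f (c * (2 * a))"
    using convex_on_shrink_lower_bound[OF f(1) c(1,2) \<open>1 - c \<le> \<rho>\<close> \<open>0 \<le> T\<close> _ f(2)]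
      doubling[of "2 * a"] a by simp
  finally have "M * ((1 + t) * f a) \<le> (1 + t) * f (c * (2 * a))"
    using t(1) by (simp add: mult.left_commute mult_left_mono)
  also have "\<dots> \<le> (1 + 2 * t) * f (c * (2 * a))"
    using t(1) f(2) by (intro mult_right_mono) auto
  finally show ?thesis
    unfolding c(3) by (simp add: a_def)
qed

lemma geom_convex_on_line_neg:
  fixes f :: "real \<Rightarrow> real"
  assumes f: "convex_on UNIV f" "\<And>s. 0 \<le> f s" "f 0 = 0"
    and expanding: "\<And>s. 0 \<le> s \<Longrightarrow> s \<le> 4 \<Longrightarrow> \<Lambda> * f s \<le> f (2 * s)"
    and t: "t < 0" "- \<rho> \<le> t" "\<rho> \<le> 1/4"
    and M: "0 \<le> M" "M \<le> (1 - 2 * \<rho>) * \<Lambda>" and "0 < \<Lambda>"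
  shows "M * ((1 + t) * f (1 / (1 + t))) \<le> (1 + 2 * t) * f (2 / (1 + 2 * t))"
proof -
  define a where "a = 1 / (1 + t)"
  define b where "b = 2 / (1 + 2 * t)"
  have a: "0 < a" "a \<le> 4/3" "2 * a \<le> b" and t': "0 < 1 + 2 * t"
    using t by (auto simp: a_def b_def field_simps)
  have "M * (1 + t) \<le> M"
    using t(1) M(1) by (simp add: mult_left_le)
  also have "\<dots> \<le> (1 - 2 * \<rho>) * \<Lambda>"
    by (fact M(2))
  also have "\<dots> \<le> (1 + 2 * t) * \<Lambda>"
    using t(2) \<open>0 < \<Lambda>\<close> by (intro mult_right_mono) auto
  finally have "M * (1 + t) * f a \<le> (1 + 2 * t) * \<Lambda> * f a"
    using f(2) by (intro mult_right_mono)
  also have "\<dots> \<le> (1 + 2 * t) * f (2 * a)"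
    using expanding a t' by (simp add: mult.assoc mult_left_mono)
  also have "\<dots> \<le> (1 + 2 * t) * f b"
    using convex_on_mono_right_of_min[OF f(1), of 0 "2 * a" b] f(2,3) a t' by (simp add: mult_left_mono)
  finally show ?thesis by (simp add: a_def b_def)
qed

lemma geom_convex_on_line:
  fixes f :: "real \<Rightarrow> real"
  assumes f: "convex_on UNIV f" "\<And>s. 0 \<le> f s" "f 0 = 0"
    and doubling: "\<And>s. 0 \<le> s \<Longrightarrow> s \<le> 4 \<Longrightarrow> f (2 * s) \<le> T * f s"
    and expanding: "\<And>s. 0 \<le> s \<Longrightarrow> s \<le> 4 \<Longrightarrow> \<Lambda> * f s \<le> f (2 * s)"
    and "\<bar>t\<bar> \<le> \<rho>" "\<rho> \<le> 1/4"
    and "0 \<le> M" "M \<le> (1 - \<rho> * T) * \<Lambda>" "M \<le> (1 - 2 * \<rho>) * \<Lambda>" and "0 \<le> T" "0 < \<Lambda>"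
  shows "M * ((1 + t) * f (1 / (1 + t))) \<le> (1 + 2 * t) * f (2 / (1 + 2 * t))"
proof (cases "t < 0")
  case True
  have "- \<rho> \<le> t"
    using assms(6) by linarith
  show ?thesis
    by (rule geom_convex_on_line_neg[where \<Lambda> = \<Lambda> and \<rho> = \<rho>])
      (fact f expanding True \<open>- \<rho> \<le> t\<close> assms(7,8,10,12))+
next
  case False
  have "0 \<le> t" "t \<le> \<rho>"
    using False assms(6) by auto
  show ?thesis
    by (rule geom_convex_on_line_nonneg[where T = T and \<Lambda> = \<Lambda> and \<rho> = \<rho>])
      (fact f doubling expanding \<open>0 \<le> t\<close> \<open>t \<le> \<rho>\<close> assms(8,9,11,12))+
qed

lemma balanced_on_lines_nonneg:
  fixes f g :: "real \<Rightarrow> real"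
  assumes g: "convex_on UNIV g" "\<And>s. 0 \<le> g s" "g 0 = 0"
    and balanced: "\<And>s. 0 \<le> s \<Longrightarrow> s \<le> 4 \<Longrightarrow> f s \<le> K * g s"
    and "0 \<le> K" "0 \<le> t" "t \<le> 1/2"
  shows "(1 + t) * f (1 / (1 + t)) \<le> 3 * K * ((1 - t) * g (1 / (1 - t)))"
proof -
  define a where "a = 1 / (1 + t)"
  define a' where "a' = 1 / (1 - t)"
  have a: "0 < a" "a \<le> 1" "a \<le> a'" "0 < 1 - t"
    using assms(6,7) by (auto simp: a_def a'_def divide_simps)
  have "f a \<le> K * g a"
    using balanced a by simp
  also have "\<dots> \<le> K * g a'"
    using convex_on_mono_right_of_min[OF g(1), of 0 a a'] g(2,3) a \<open>0 \<le> K\<close> by (simp add: mult_left_mono)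
  finally have "(1 + t) * f a \<le> (1 + t) * (K * g a')"
    using assms(6) by (simp add: mult_left_mono)
  also have "\<dots> \<le> (3 * (1 - t)) * (K * g a')"
    using assms(5,7) g(2) by (intro mult_right_mono) auto
  also have "\<dots> = 3 * K * ((1 - t) * g a')"
    by (simp add: mult_ac)
  finally show ?thesis by (simp add: a_def a'_def)
qed

lemma balanced_on_lines_neg:
  fixes f g :: "real \<Rightarrow> real"
  assumes f: "convex_on UNIV f" "\<And>s. 0 \<le> f s" "f 0 = 0" and "\<And>s. 0 \<le> g s"
    and doubling: "\<And>s. 0 \<le> s \<Longrightarrow> s \<le> 4 \<Longrightarrow> f (2 * s) \<le> T * f s"
    and balanced: "\<And>s. 0 \<le> s \<Longrightarrow> s \<le> 4 \<Longrightarrow> f s \<le> K * g s"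
    and "0 \<le> T" "0 \<le> K" "t < 0" "- 1/3 \<le> t"
  shows "(1 + t) * f (1 / (1 + t)) \<le> T * K * ((1 - t) * g (1 / (1 - t)))"
proof -
  define a where "a = 1 / (1 + t)"
  define a' where "a' = 1 / (1 - t)"
  have a: "0 < a" "a \<le> 2 * a'" "0 < a'" "a' \<le> 1" "0 < 1 + t"
    using assms(9,10) by (auto simp: a_def a'_def divide_simps)
  have "f a \<le> f (2 * a')"
    using convex_on_mono_right_of_min[OF f(1), of 0] f(2,3) a by simp
  also have "\<dots> \<le> T * f a'"
    using doubling a by simp
  also have "\<dots> \<le> T * (K * g a')"
    using balanced a \<open>0 \<le> T\<close> by (simp add: mult_left_mono)
  finally have "(1 + t) * f a \<le> (1 + t) * (T * K * g a')"
    using a(5) by (simp add: mult_left_mono mult.assoc)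
  also have "\<dots> \<le> (1 - t) * (T * K * g a')"
    using assms(4,7-9) by (intro mult_right_mono) auto
  also have "\<dots> = T * K * ((1 - t) * g a')"
    by (simp add: mult_ac)
  finally show ?thesis by (simp add: a_def a'_def)
qed

lemma balanced_on_lines:
  fixes f g :: "real \<Rightarrow> real"
  assumes f: "convex_on UNIV f" "\<And>s. 0 \<le> f s" "f 0 = 0"
    and g: "convex_on UNIV g" "\<And>s. 0 \<le> g s" "g 0 = 0"
    and doubling: "\<And>s. 0 \<le> s \<Longrightarrow> s \<le> 4 \<Longrightarrow> f (2 * s) \<le> T * f s"
    and balanced: "\<And>s. 0 \<le> s \<Longrightarrow> s \<le> 4 \<Longrightarrow> f s \<le> K * g s"
    and "0 \<le> T" "0 \<le> K" "\<bar>t\<bar> \<le> 1/4"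
  shows "(1 + t) * f (1 / (1 + t)) \<le> (1 + 3 * K + T * K) * ((1 - t) * g (1 / (1 - t)))"
proof -
  have "0 \<le> (1 - t) * g (1 / (1 - t))"
    using assms(11) g(2) by simp
  moreover obtain C where "C \<le> 1 + 3 * K + T * K" "(1 + t) * f (1 / (1 + t)) \<le> C * ((1 - t) * g (1 / (1 - t)))"
  proof (cases "t < 0")
    case True
    have "- 1/3 \<le> t"
      using assms(11) by linarith
    then show ?thesis
      using that[of "T * K"] balanced_on_lines_neg[OF f g(2) doubling balanced] assms(9,10) True by simp
  next
    case False
    then have "0 \<le> t" "t \<le> 1/2"
      using assms(11) by auto
    then show ?thesis
      using that[of "3 * K"] balanced_on_lines_nonneg[OF g balanced] assms(9,10) by simp
  qed
  ultimately show ?thesis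
    by (meson mult_right_mono order_trans)
qed

lemma is_norm_scaleR: "is_norm nrm \<Longrightarrow> nrm (c *\<^sub>R x) = \<bar>c\<bar> * nrm x"
  and is_norm_triangle: "is_norm nrm \<Longrightarrow> nrm (x + y) \<le> nrm x + nrm y"
  and is_norm_nonneg: "is_norm nrm \<Longrightarrow> 0 \<le> nrm x"
  and is_norm_pos: "is_norm nrm \<Longrightarrow> x \<noteq> 0 \<Longrightarrow> 0 < nrm x"
  unfolding is_norm_def by (auto simp: order_le_less)

lemma is_norm_minus: "is_norm nrm \<Longrightarrow> nrm (- x) = nrm x"
  using is_norm_scaleR[of nrm "-1" x] by simp

lemma has_derivative_grad:
  assumes "C1_off_origin nrm" "x \<noteq> 0"
  shows "(nrm has_derivative (\<lambda>v. grad nrm x \<bullet> v)) (at x)"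
proof -
  obtain D where D: "(nrm has_derivative D) (at x)"
    using assms unfolding C1_off_origin_def differentiable_def by blast
  \<comment> \<open>the Riesz representative of the real-valued linear map \<open>D\<close> is \<open>adjoint D 1\<close>\<close>
  have "D = (\<lambda>v. adjoint D 1 \<bullet> v)"
    using adjoint_clauses(2)[OF has_derivative_linear[OF D]] by fastforce
  with D show ?thesis
    unfolding grad_def by (metis (mono_tags) someI_ex)
qed

lemma convex_on_norm_line:
  assumes "is_norm nrm"
  shows "convex_on UNIV (\<lambda>s. nrm (p + s *\<^sub>R w))"
proof (rule convex_onI)
  fix t u v :: real assume t: "0 < t" "t < 1"
  have "p + ((1 - t) *\<^sub>R u + t *\<^sub>R v) *\<^sub>R w = (1 - t) *\<^sub>R (p + u *\<^sub>R w) + t *\<^sub>R (p + v *\<^sub>R w)"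
    by (simp add: algebra_simps)
  also have "nrm \<dots> \<le> (1 - t) * nrm (p + u *\<^sub>R w) + t * nrm (p + v *\<^sub>R w)"
    using is_norm_triangle[OF assms] is_norm_scaleR[OF assms] t by (metis abs_of_pos diff_gt_0_iff_gt)
  finally show "nrm (p + ((1 - t) *\<^sub>R u + t *\<^sub>R v) *\<^sub>R w) \<le> (1 - t) * nrm (p + u *\<^sub>R w) + t * nrm (p + v *\<^sub>R w)" .
qed simp

lemma convex_on_hfun_line:
  assumes "is_norm nrm"
  shows "convex_on UNIV (\<lambda>s. hfun nrm x (p + s *\<^sub>R w))"
proof -
  have "concave_on UNIV (\<lambda>s. (p + s *\<^sub>R w) \<bullet> grad nrm x)"
    by (auto simp: concave_on_iff inner_add_left algebra_simps simp flip: distrib_right)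
  with convex_on_norm_line[OF assms] show ?thesis
    unfolding hfun_def by (rule convex_on_diff)
qed

lemma norm_add_ge_grad_inner:
  assumes "is_norm nrm" "C1_off_origin nrm" "x \<noteq> 0"
  shows "nrm x + grad nrm x \<bullet> w \<le> nrm (x + w)"
proof -
  have "((\<lambda>s. x + s *\<^sub>R w) has_derivative (\<lambda>s. s *\<^sub>R w)) (at 0)"
    by (auto intro!: derivative_eq_intros)
  moreover have "(nrm has_derivative (\<lambda>v. grad nrm x \<bullet> v)) (at (x + 0 *\<^sub>R w))"
    using has_derivative_grad[OF assms(2,3)] by simp
  ultimately have "((\<lambda>s. nrm (x + s *\<^sub>R w)) has_derivative (\<lambda>s. grad nrm x \<bullet> (s *\<^sub>R w))) (at 0)"
    by (metis (no_types) has_derivative_compose comp_def)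
  then have "((\<lambda>s. nrm (x + s *\<^sub>R w)) has_field_derivative grad nrm x \<bullet> w) (at 0)"
    by (simp add: has_field_derivative_def mult.commute[of _ "grad nrm x \<bullet> w"])
  from convex_on_imp_above_tangent[OF convex_on_norm_line[OF assms(1)] _ _ _ this, of 1]
  show ?thesis by simp
qed

lemma grad_inner_self:
  assumes "is_norm nrm" "C1_off_origin nrm" "x \<noteq> 0"
  shows "grad nrm x \<bullet> x = nrm x"
proof -
  have "nrm x + (c - 1) * (grad nrm x \<bullet> x) \<le> c * nrm x" if "0 \<le> c" for c
    using norm_add_ge_grad_inner[OF assms, of "(c - 1) *\<^sub>R x"] is_norm_scaleR[OF assms(1), of c x] that
    by (simp add: algebra_simps)
  from this[of 2] this[of "1/2"] show ?thesis by simp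
qed

lemma abs_grad_inner_le:
  assumes "is_norm nrm" "C1_off_origin nrm" "x \<noteq> 0"
  shows "\<bar>grad nrm x \<bullet> y\<bar> \<le> nrm y"
  using norm_add_ge_grad_inner[OF assms, of y] norm_add_ge_grad_inner[OF assms, of "- y"]
    is_norm_triangle[OF assms(1), of x y] is_norm_triangle[OF assms(1), of x "- y"]
    is_norm_minus[OF assms(1), of y]
  by (simp add: abs_le_iff)

lemma hfun_nonneg:
  assumes "is_norm nrm" "C1_off_origin nrm" "x \<noteq> 0"
  shows "0 \<le> hfun nrm x v"
  using norm_add_ge_grad_inner[OF assms, of "v - x"] grad_inner_self[OF assms]
  unfolding hfun_def by (simp add: inner_diff_right inner_commute)

lemma hfun_self_eq_0:
  assumes "is_norm nrm" "C1_off_origin nrm" "x \<noteq> 0"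
  shows "hfun nrm x x = 0"
  using grad_inner_self[OF assms] unfolding hfun_def by (simp add: inner_commute)

lemma hfun_scaleR:
  assumes "is_norm nrm" "0 \<le> c"
  shows "hfun nrm x (c *\<^sub>R v) = c * hfun nrm x v"
  using is_norm_scaleR[OF assms(1), of c v] assms(2) unfolding hfun_def by (simp add: algebra_simps)

lemma tangent_decomposition:
  assumes "is_norm nrm" "C1_off_origin nrm" "x \<noteq> 0" "nrm y \<le> \<rho> * nrm x"
  obtains t z where "y = t *\<^sub>R x + z" "z \<bullet> grad nrm x = 0" "\<bar>t\<bar> \<le> \<rho>" "nrm z \<le> 2 * \<rho> * nrm x"
proof
  define t where "t = y \<bullet> grad nrm x / nrm x"
  have nx: "0 < nrm x"
    using is_norm_pos[OF assms(1,3)] .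
  show "y = t *\<^sub>R x + (y - t *\<^sub>R x)" by simp
  show "(y - t *\<^sub>R x) \<bullet> grad nrm x = 0"
    using grad_inner_self[OF assms(1-3)] nx by (simp add: t_def inner_diff_left inner_commute[of x])
  show t: "\<bar>t\<bar> \<le> \<rho>"
    using abs_grad_inner_le[OF assms(1-3), of y] assms(4) nx
    by (simp add: t_def abs_divide divide_le_eq inner_commute)
  have "nrm (y - t *\<^sub>R x) \<le> nrm y + \<bar>t\<bar> * nrm x"
    using is_norm_triangle[OF assms(1), of y "- (t *\<^sub>R x)"] is_norm_minus[OF assms(1)]
      is_norm_scaleR[OF assms(1)] by simp
  also have "\<dots> \<le> \<rho> * nrm x + \<rho> * nrm x"
    using t nx assms(4) by (intro add_mono mult_right_mono) auto
  finally show "nrm (y - t *\<^sub>R x) \<le> 2 * \<rho> * nrm x" by simp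
qed

lemma hfun_scaleR_self_add:
  assumes "is_norm nrm" "0 < m"
  shows "hfun nrm x (m *\<^sub>R x + z) = m * hfun nrm x (x + (1 / m) *\<^sub>R z)"
proof -
  have "m *\<^sub>R x + z = m *\<^sub>R (x + (1 / m) *\<^sub>R z)"
    using assms(2) by (simp add: algebra_simps)
  then show ?thesis
    using hfun_scaleR[OF assms(1)] assms(2) by simp
qed

lemma tangent_reduction:
  assumes N: "is_norm nrm" and C: "C1_off_origin nrm" and "x \<noteq> 0"
    and "nrm y \<le> \<rho> * nrm x" "\<rho> \<le> 1/4"
  obtains t z where "\<bar>t\<bar> \<le> \<rho>" "z \<bullet> grad nrm x = 0"
    "\<And>s r. \<bar>s\<bar> \<le> 4 \<Longrightarrow> 8 * \<rho> \<le> r \<Longrightarrow> nrm (s *\<^sub>R z) \<le> r * nrm x"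
    "hfun nrm x (x + y) = (1 + t) * hfun nrm x (x + (1 / (1 + t)) *\<^sub>R z)"
    "hfun nrm x (x + 2 *\<^sub>R y) = (1 + 2 * t) * hfun nrm x (x + (2 / (1 + 2 * t)) *\<^sub>R z)"
    "hfun nrm x (x - y) = (1 - t) * hfun nrm x (x + (1 / (1 - t)) *\<^sub>R (- z))"
proof -
  obtain t z where y: "y = t *\<^sub>R x + z" and z: "z \<bullet> grad nrm x = 0"
    and t: "\<bar>t\<bar> \<le> \<rho>" and nz: "nrm z \<le> 2 * \<rho> * nrm x"
    using tangent_decomposition[OF assms(1-4)] .
  have "nrm (s *\<^sub>R z) \<le> r * nrm x" if "\<bar>s\<bar> \<le> 4" "8 * \<rho> \<le> r" for s r
  proof -
    have "\<bar>s\<bar> * nrm z \<le> 4 * (2 * \<rho> * nrm x)"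
      using that nz is_norm_nonneg[OF N, of z] by (intro mult_mono) auto
    also have "\<dots> \<le> r * nrm x"
      using mult_right_mono[OF that(2) is_norm_nonneg[OF N, of x]] by simp
    finally show ?thesis
      using is_norm_scaleR[OF N, of s z] by simp
  qed
  moreover have "0 < 1 + t" "0 < 1 + 2 * t" "0 < 1 - t"
    using t assms(5) by auto
  moreover have "x + y = (1 + t) *\<^sub>R x + z" "x + 2 *\<^sub>R y = (1 + 2 * t) *\<^sub>R x + 2 *\<^sub>R z"
    "x - y = (1 - t) *\<^sub>R x + - z"
    using y by (simp_all add: algebra_simps)
  ultimately show ?thesis
    using that[OF t z] by (simp only: hfun_scaleR_self_add[OF N] scaleR_scaleR) simp
qed

lemma doubling_if_doubling_tangent:
  assumes N: "is_norm nrm" and C: "C1_off_origin nrm" and "doubling_tangent nrm"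
  shows "doubling nrm"
proof -
  obtain T r where "0 < T" "0 < r" and DT: "\<And>x y. x \<noteq> 0 \<Longrightarrow> nrm y \<le> r * nrm x \<Longrightarrow>
      y \<bullet> grad nrm x = 0 \<Longrightarrow> hfun nrm x (x + 2 *\<^sub>R y) \<le> T * hfun nrm x (x + y)"
    using assms(3) unfolding doubling_tangent_def by blast
  define \<rho> where "\<rho> = min (1/4) (r/8)"
  have \<rho>: "0 < \<rho>" "\<rho> \<le> 1/4" "8 * \<rho> \<le> r"
    using \<open>0 < r\<close> by (auto simp: \<rho>_def)
  have "hfun nrm x (x + 2 *\<^sub>R y) \<le> 2 * T\<^sup>2 * hfun nrm x (x + y)"
    if x: "x \<noteq> 0" and y: "nrm y \<le> \<rho> * nrm x" for x y
  proof -
    obtain t z where t: "\<bar>t\<bar> \<le> \<rho>" and z: "z \<bullet> grad nrm x = 0"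
      and small: "\<And>s r. \<bar>s\<bar> \<le> 4 \<Longrightarrow> 8 * \<rho> \<le> r \<Longrightarrow> nrm (s *\<^sub>R z) \<le> r * nrm x"
      and h: "hfun nrm x (x + y) = (1 + t) * hfun nrm x (x + (1 / (1 + t)) *\<^sub>R z)"
        "hfun nrm x (x + 2 *\<^sub>R y) = (1 + 2 * t) * hfun nrm x (x + (2 / (1 + 2 * t)) *\<^sub>R z)"
        "hfun nrm x (x - y) = (1 - t) * hfun nrm x (x + (1 / (1 - t)) *\<^sub>R (- z))"
      by (rule tangent_reduction[OF N C x y \<rho>(2)], rule that)
    define f where "f s = hfun nrm x (x + s *\<^sub>R z)" for s
    have f: "convex_on UNIV f" "\<And>s. 0 \<le> f s" "f 0 = 0"
      unfolding f_def using convex_on_hfun_line[OF N] hfun_nonneg[OF N C x] hfun_self_eq_0[OF N C x] by simp_all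
    have "f (2 * s) \<le> T * f s" if "0 \<le> s" "s \<le> 4" for s
      using DT[OF x small[of s r]] z that \<rho>(3) by (simp add: f_def)
    from doubling_on_line[OF f this] \<open>0 < T\<close> t \<rho>(2) h show ?thesis
      by (simp add: f_def)
  qed
  then show ?thesis
    unfolding doubling_def using \<rho>(1) \<open>0 < T\<close> by (intro exI[of _ "2 * T\<^sup>2"] exI[of _ \<rho>]) auto
qed

lemma geom_convex_radius:
  fixes T \<Lambda> r :: real
  assumes "0 \<le> T" "2 < \<Lambda>" "0 < r"
  obtains \<rho> where "0 < \<rho>" "\<rho> \<le> 1/4" "8 * \<rho> \<le> r"
    "(\<Lambda> + 2) / 2 \<le> (1 - \<rho> * T) * \<Lambda>" "(\<Lambda> + 2) / 2 \<le> (1 - 2 * \<rho>) * \<Lambda>"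
proof
  define \<rho> where "\<rho> = min (min (1/4) (r/8)) ((\<Lambda> - 2) / (2 * \<Lambda> * (T + 2)))"
  have \<rho>: "\<rho> \<le> 1/4" "\<rho> \<le> r/8" "\<rho> \<le> (\<Lambda> - 2) / (2 * \<Lambda> * (T + 2))"
    unfolding \<rho>_def by linarith+
  then show "0 < \<rho>" "\<rho> \<le> 1/4" "8 * \<rho> \<le> r"
    using assms by (auto simp: \<rho>_def)
  have "2 * \<Lambda> * (T + 2) * \<rho> \<le> \<Lambda> - 2"
    using \<rho>(3) assms(1,2) by (simp add: pos_le_divide_eq mult.commute)
  moreover have "2 * \<Lambda> * (T + 2) * \<rho> = 2 * (T * \<Lambda> * \<rho>) + 4 * (\<Lambda> * \<rho>)"
    "(1 - \<rho> * T) * \<Lambda> = \<Lambda> - T * \<Lambda> * \<rho>" "(1 - 2 * \<rho>) * \<Lambda> = \<Lambda> - 2 * (\<Lambda> * \<rho>)"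
    by (simp_all add: algebra_simps)
  moreover have "0 \<le> T * \<Lambda> * \<rho>" "0 \<le> \<Lambda> * \<rho>"
    using assms \<open>0 < \<rho>\<close> by simp_all
  ultimately show "(\<Lambda> + 2) / 2 \<le> (1 - \<rho> * T) * \<Lambda>" "(\<Lambda> + 2) / 2 \<le> (1 - 2 * \<rho>) * \<Lambda>"
    by argo+
qed

lemma geom_convex_if_geom_convex_tangent:
  assumes N: "is_norm nrm" and C: "C1_off_origin nrm"
    and "doubling_tangent nrm" "geom_convex_tangent nrm"
  shows "geom_convex nrm"
proof -
  obtain T r1 where "0 < T" "0 < r1" and DT: "\<And>x y. x \<noteq> 0 \<Longrightarrow> nrm y \<le> r1 * nrm x \<Longrightarrow>
      y \<bullet> grad nrm x = 0 \<Longrightarrow> hfun nrm x (x + 2 *\<^sub>R y) \<le> T * hfun nrm x (x + y)"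
    using assms(3) unfolding doubling_tangent_def by blast
  obtain \<Lambda> r2 where "2 < \<Lambda>" "0 < r2" and GT: "\<And>x y. x \<noteq> 0 \<Longrightarrow> nrm y \<le> r2 * nrm x \<Longrightarrow>
      y \<bullet> grad nrm x = 0 \<Longrightarrow> \<Lambda> * hfun nrm x (x + y) \<le> hfun nrm x (x + 2 *\<^sub>R y)"
    using assms(4) unfolding geom_convex_tangent_def by blast
  obtain \<rho> where \<rho>: "0 < \<rho>" "\<rho> \<le> 1/4" "8 * \<rho> \<le> min r1 r2"
    and M: "(\<Lambda> + 2) / 2 \<le> (1 - \<rho> * T) * \<Lambda>" "(\<Lambda> + 2) / 2 \<le> (1 - 2 * \<rho>) * \<Lambda>"
    using geom_convex_radius[of T \<Lambda> "min r1 r2"] \<open>0 < T\<close> \<open>2 < \<Lambda>\<close> \<open>0 < r1\<close> \<open>0 < r2\<close> by auto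
  have "(\<Lambda> + 2) / 2 * hfun nrm x (x + y) \<le> hfun nrm x (x + 2 *\<^sub>R y)"
    if x: "x \<noteq> 0" and y: "nrm y \<le> \<rho> * nrm x" for x y
  proof -
    obtain t z where t: "\<bar>t\<bar> \<le> \<rho>" and z: "z \<bullet> grad nrm x = 0"
      and small: "\<And>s r. \<bar>s\<bar> \<le> 4 \<Longrightarrow> 8 * \<rho> \<le> r \<Longrightarrow> nrm (s *\<^sub>R z) \<le> r * nrm x"
      and h: "hfun nrm x (x + y) = (1 + t) * hfun nrm x (x + (1 / (1 + t)) *\<^sub>R z)"
        "hfun nrm x (x + 2 *\<^sub>R y) = (1 + 2 * t) * hfun nrm x (x + (2 / (1 + 2 * t)) *\<^sub>R z)"
        "hfun nrm x (x - y) = (1 - t) * hfun nrm x (x + (1 / (1 - t)) *\<^sub>R (- z))"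
      by (rule tangent_reduction[OF N C x y \<rho>(2)], rule that)
    define f where "f s = hfun nrm x (x + s *\<^sub>R z)" for s
    have f: "convex_on UNIV f" "\<And>s. 0 \<le> f s" "f 0 = 0"
      unfolding f_def using convex_on_hfun_line[OF N] hfun_nonneg[OF N C x] hfun_self_eq_0[OF N C x] by simp_all
    have "f (2 * s) \<le> T * f s" if "0 \<le> s" "s \<le> 4" for s
      using DT[OF x small[of s r1]] z that \<rho>(3) by (simp add: f_def)
    moreover have "\<Lambda> * f s \<le> f (2 * s)" if "0 \<le> s" "s \<le> 4" for s
      using GT[OF x small[of s r2]] z that \<rho>(3) by (simp add: f_def)
    ultimately show ?thesis
      using geom_convex_on_line[OF f, of T \<Lambda> t \<rho> "(\<Lambda> + 2) / 2"] t \<rho>(2) M \<open>0 < T\<close> \<open>2 < \<Lambda>\<close> h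
      by (simp add: f_def)
  qed
  then show ?thesis
    unfolding geom_convex_def using \<rho>(1) \<open>2 < \<Lambda>\<close>
    by (intro exI[of _ \<rho>] exI[of _ "(\<Lambda> + 2) / 2"]) auto
qed

lemma balanced_if_balanced_tangent:
  assumes N: "is_norm nrm" and C: "C1_off_origin nrm"
    and "doubling_tangent nrm" "balanced_tangent nrm"
  shows "balanced nrm"
proof -
  obtain T r1 where "0 < T" "0 < r1" and DT: "\<And>x y. x \<noteq> 0 \<Longrightarrow> nrm y \<le> r1 * nrm x \<Longrightarrow>
      y \<bullet> grad nrm x = 0 \<Longrightarrow> hfun nrm x (x + 2 *\<^sub>R y) \<le> T * hfun nrm x (x + y)"
    using assms(3) unfolding doubling_tangent_def by blast
  obtain r2 K where "0 < r2" "0 < K" and BT: "\<And>x y. x \<noteq> 0 \<Longrightarrow> nrm y \<le> r2 * nrm x \<Longrightarrow>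
      y \<bullet> grad nrm x = 0 \<Longrightarrow> hfun nrm x (x + y) \<le> K * hfun nrm x (x - y)"
    using assms(4) unfolding balanced_tangent_def by blast
  define \<rho> where "\<rho> = min (1/4) (min r1 r2 / 8)"
  have \<rho>: "0 < \<rho>" "\<rho> \<le> 1/4" "8 * \<rho> \<le> r1" "8 * \<rho> \<le> r2"
    using \<open>0 < r1\<close> \<open>0 < r2\<close> by (auto simp: \<rho>_def)
  have "hfun nrm x (x + y) \<le> (1 + 3 * K + T * K) * hfun nrm x (x - y)"
    if x: "x \<noteq> 0" and y: "nrm y \<le> \<rho> * nrm x" for x y
  proof -
    obtain t z where t: "\<bar>t\<bar> \<le> \<rho>" and z: "z \<bullet> grad nrm x = 0"
      and small: "\<And>s r. \<bar>s\<bar> \<le> 4 \<Longrightarrow> 8 * \<rho> \<le> r \<Longrightarrow> nrm (s *\<^sub>R z) \<le> r * nrm x"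
      and h: "hfun nrm x (x + y) = (1 + t) * hfun nrm x (x + (1 / (1 + t)) *\<^sub>R z)"
        "hfun nrm x (x + 2 *\<^sub>R y) = (1 + 2 * t) * hfun nrm x (x + (2 / (1 + 2 * t)) *\<^sub>R z)"
        "hfun nrm x (x - y) = (1 - t) * hfun nrm x (x + (1 / (1 - t)) *\<^sub>R (- z))"
      by (rule tangent_reduction[OF N C x y \<rho>(2)], rule that)
    define f where "f s = hfun nrm x (x + s *\<^sub>R z)" for s
    define g where "g s = hfun nrm x (x + s *\<^sub>R (- z))" for s
    have f: "convex_on UNIV f" "\<And>s. 0 \<le> f s" "f 0 = 0"
      unfolding f_def using convex_on_hfun_line[OF N] hfun_nonneg[OF N C x] hfun_self_eq_0[OF N C x] by simp_all
    have g: "convex_on UNIV g" "\<And>s. 0 \<le> g s" "g 0 = 0"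
      unfolding g_def using convex_on_hfun_line[OF N, of x x "- z"] hfun_nonneg[OF N C x] hfun_self_eq_0[OF N C x]
      by simp_all
    have "f (2 * s) \<le> T * f s" if "0 \<le> s" "s \<le> 4" for s
      using DT[OF x small[of s r1]] z that \<rho>(3) by (simp add: f_def)
    moreover have "f s \<le> K * g s" if "0 \<le> s" "s \<le> 4" for s
      using BT[OF x small[of s r2]] z that \<rho>(4) by (simp add: f_def g_def)
    ultimately show ?thesis
      using balanced_on_lines[OF f g, of T K t] t \<rho>(2) \<open>0 < T\<close> \<open>0 < K\<close> h
      by (simp add: f_def g_def)
  qed
  then show ?thesis
    unfolding balanced_def using \<rho>(1) \<open>0 < T\<close> \<open>0 < K\<close>
    by (intro exI[of _ \<rho>] exI[of _ "1 + 3 * K + T * K"]) auto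
qed

theorem theorem6p5:
  fixes nrm :: "real^'n \<Rightarrow> real"
  assumes "is_norm nrm"
    and "strictly_convex_norm nrm"
    and "C1_off_origin nrm"
  shows "(doubling_tangent nrm \<longrightarrow> doubling nrm) \<and>
         (doubling_tangent nrm \<and> geom_convex_tangent nrm \<longrightarrow> geom_convex nrm) \<and>
         (doubling_tangent nrm \<and> balanced_tangent nrm \<longrightarrow> balanced nrm)"
  using doubling_if_doubling_tangent[OF assms(1,3)] geom_convex_if_geom_convex_tangent[OF assms(1,3)]
    balanced_if_balanced_tangent[OF assms(1,3)]
  by blast

end
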